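(* Let $(X,\sigma)$ be a one-sided subshift. If there is $z\in X$ such that the set $\{y\in X:(y,z)\in\mathrm{SProx}(\sigma)\}$ is uncountable, then $(X,\sigma)$ has a Cantor syndetically scrambled set.
   Context: A one-sided subshift is a nonempty closed $\sigma$-invariant subset of $\mathcal A^{\mathbb N_0}$ ($\mathcal A$ finite) with the left shift $\sigma$. $\mathrm{Asy}(\sigma)=\{(x,y):d(\sigma^nx,\sigma^ny)\to0\}$; $\mathrm{SProx}(\sigma)=\{(x,y):\{n:d(\sigma^nx,\sigma^ny)<\varepsilon\}$ syndetic for all $\varepsilon>0\}$, syndetic meaning meeting every subset of $\mathbb N$ with arbitrarily long runs of consecutive integers. A syndetically scrambled set is a set with at least two points all of whose distinct pairs lie in $\mathrm{SProx}(\sigma)\setminus\mathrm{Asy}(\sigma)$. A Cantor set is a nonempty compact perfect totally disconnected set. *)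

theory Defs
  imports "HOL-Analysis.Analysis"
begin

definition shift_top :: "'a set \<Rightarrow> (nat \<Rightarrow> 'a) topology" where
  "shift_top A = product_topology (\<lambda>_. discrete_topology A) UNIV"

definition sigma :: "(nat \<Rightarrow> 'a) \<Rightarrow> (nat \<Rightarrow> 'a)" where
  "sigma x = (\<lambda>n. x (Suc n))"

definition sdist :: "(nat \<Rightarrow> 'a) \<Rightarrow> (nat \<Rightarrow> 'a) \<Rightarrow> real" where
  "sdist x y = (if x = y then 0 else (1/2) ^ (LEAST n. x n \<noteq> y n))"

definition one_sided_subshift :: "'a set \<Rightarrow> (nat \<Rightarrow> 'a) set \<Rightarrow> bool" where
  "one_sided_subshift A X \<longleftrightarrow> finite A \<and> X \<noteq> {} \<and> X \<subseteq> topspace (shift_top A)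
     \<and> closedin (shift_top A) X \<and> sigma ` X \<subseteq> X"

definition thick :: "nat set \<Rightarrow> bool" where
  "thick S \<longleftrightarrow> (\<forall>L. \<exists>m. {m..<m+L} \<subseteq> S)"

definition syndetic :: "nat set \<Rightarrow> bool" where
  "syndetic S \<longleftrightarrow> (\<forall>T. thick T \<longrightarrow> S \<inter> T \<noteq> {})"

definition Asy :: "(nat \<Rightarrow> 'a) set \<Rightarrow> ((nat \<Rightarrow> 'a) \<times> (nat \<Rightarrow> 'a)) set" where
  "Asy X = {(x,y). x \<in> X \<and> y \<in> X \<and>
      (\<lambda>n. sdist ((sigma ^^ n) x) ((sigma ^^ n) y)) \<longlonglongrightarrow> 0}"

definition SProx :: "(nat \<Rightarrow> 'a) set \<Rightarrow> ((nat \<Rightarrow> 'a) \<times> (nat \<Rightarrow> 'a)) set" where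
  "SProx X = {(x,y). x \<in> X \<and> y \<in> X \<and>
      (\<forall>\<epsilon>>0. syndetic {n. sdist ((sigma ^^ n) x) ((sigma ^^ n) y) < \<epsilon>})}"

definition synd_scrambled :: "(nat \<Rightarrow> 'a) set \<Rightarrow> (nat \<Rightarrow> 'a) set \<Rightarrow> bool" where
  "synd_scrambled X S \<longleftrightarrow> S \<subseteq> X \<and> (\<exists>x\<in>S. \<exists>y\<in>S. x \<noteq> y) \<and>
     (\<forall>x\<in>S. \<forall>y\<in>S. x \<noteq> y \<longrightarrow> (x,y) \<in> SProx X - Asy X)"

definition cantor_set_in :: "'b topology \<Rightarrow> 'b set \<Rightarrow> bool" where
  "cantor_set_in T C \<longleftrightarrow> C \<noteq> {} \<and> compactin T C \<and> C \<subseteq> T derived_set_of C \<and>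
     (\<forall>S. S \<subseteq> C \<and> connectedin T S \<longrightarrow> (\<exists>a. S \<subseteq> {a}))"

end

theory Submission
  imports Defs
begin

text \<open>
  Two points x, y of a subshift are syndetically proximal iff for every k the
  times n at which x and y agree on the window [n, n+k] form a set with bounded gaps.  This
  relation is "transitive through a common partner": if x and y are both syndetically
  proximal to z, so are x and y.  Hence it suffices to find a Cantor set C inside the
  closure of the uncountable set Y = {y \<in> X. (y, z) \<in> SProx X}, all of whose points are
  syndetically proximal to z, and any two of which differ at infinitely many places (so no
  pair is asymptotic).

  C is built by a Cantor scheme: at level n we have, for each binary word s of length n, an
  uncountable set B s \<subseteq> Y of points sharing a common prefix of length L n and a uniform gap
  bound for agreement with z on windows of length k < n.  Refining a level uses a pigeonhole
  argument over gap bounds and condensation points (all but countably many points of an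
  uncountable set of sequences are condensation points).  The branches of the scheme give a
  map from the Cantor space {0,1}^\<nat> into X which preserves prefixes and separates points
  at infinitely many coordinates; its image is the required Cantor set.
\<close>

lemma sigma_pow: "(sigma ^^ n) x i = x (n + i)"
  by (induction n arbitrary: x i) (auto simp: sigma_def funpow_Suc_right)

lemma sdist_less_half_pow: "sdist u v < (1/2::real) ^ k \<longleftrightarrow> (\<forall>i\<le>k. u i = v i)"
proof (cases "u = v")
  case True
  then show ?thesis by (simp add: sdist_def)
next
  case False
  then obtain j where "u j \<noteq> v j" by auto
  define l where "l = (LEAST n. u n \<noteq> v n)"
  have l_differs: "u l \<noteq> v l"
    unfolding l_def by (rule LeastI) fact
  have below_l: "\<And>i. i < l \<Longrightarrow> u i = v i"
    unfolding l_def using not_less_Least by blast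
  have "sdist u v = (1/2) ^ l"
    using False by (simp add: sdist_def l_def)
  moreover have "((1/2::real) ^ l < (1/2) ^ k) \<longleftrightarrow> k < l"
    by (simp add: power_strict_decreasing_iff)
  moreover have "k < l \<longleftrightarrow> (\<forall>i\<le>k. u i = v i)"
  proof
    assume "\<forall>i\<le>k. u i = v i"
    then show "k < l" using l_differs by (cases "k < l") auto
  qed (simp add: below_l)
  ultimately show ?thesis by simp
qed

definition bounded_gaps :: "nat set \<Rightarrow> nat \<Rightarrow> bool" where
  "bounded_gaps S G \<longleftrightarrow> (\<forall>j. \<exists>n\<in>S. j \<le> n \<and> n < j + G)"

lemma syndetic_iff_bounded_gaps: "syndetic S \<longleftrightarrow> (\<exists>G. bounded_gaps S G)"
proof
  assume S: "syndetic S"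
  show "\<exists>G. bounded_gaps S G"
  proof (rule ccontr)
    assume "\<not> ?thesis"
    then have "thick (- S)"
      unfolding thick_def bounded_gaps_def by fastforce
    with S show False
      unfolding syndetic_def by blast
  qed
next
  assume "\<exists>G. bounded_gaps S G"
  then obtain G where G: "bounded_gaps S G" by blast
  show "syndetic S"
    unfolding syndetic_def
  proof (intro allI impI)
    fix T assume "thick T"
    then obtain m where "{m..<m+G} \<subseteq> T"
      unfolding thick_def by blast
    with G show "S \<inter> T \<noteq> {}"
      unfolding bounded_gaps_def by fastforce
  qed
qed

lemma syndetic_mono: "syndetic S \<Longrightarrow> S \<subseteq> T \<Longrightarrow> syndetic T"
  unfolding syndetic_def by blast

subsection \<open>Syndetic proximality as syndetic agreement\<close>

definition agree_set :: "(nat \<Rightarrow> 'a) \<Rightarrow> (nat \<Rightarrow> 'a) \<Rightarrow> nat \<Rightarrow> nat set" where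
  "agree_set x y k = {n. \<forall>i\<le>k. x (n + i) = y (n + i)}"

definition synd_agree :: "(nat \<Rightarrow> 'a) \<Rightarrow> (nat \<Rightarrow> 'a) \<Rightarrow> bool" where
  "synd_agree x y \<longleftrightarrow> (\<forall>k. \<exists>G. bounded_gaps (agree_set x y k) G)"

lemma orbit_sdist_less_iff:
  "sdist ((sigma ^^ n) x) ((sigma ^^ n) y) < (1/2) ^ k \<longleftrightarrow> n \<in> agree_set x y k"
  by (simp add: sdist_less_half_pow sigma_pow agree_set_def)

text \<open>Syndetic proximality is syndetic agreement: the ball of radius (1/2)^k in the orbit
  metric is the agreement set for windows of length k+1.\<close>
lemma SProx_iff: "(x, y) \<in> SProx X \<longleftrightarrow> x \<in> X \<and> y \<in> X \<and> synd_agree x y"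
proof -
  let ?close = "\<lambda>\<epsilon>. {n. sdist ((sigma ^^ n) x) ((sigma ^^ n) y) < \<epsilon>}"
  have "(\<forall>\<epsilon>>0. syndetic (?close \<epsilon>)) \<longleftrightarrow> (\<forall>k. syndetic (agree_set x y k))"
  proof
    assume close: "\<forall>\<epsilon>>0. syndetic (?close \<epsilon>)"
    show "\<forall>k. syndetic (agree_set x y k)"
    proof
      fix k
      have "?close ((1/2) ^ k) = agree_set x y k"
        using orbit_sdist_less_iff[of _ x y k] by blast
      then show "syndetic (agree_set x y k)"
        using close[rule_format, of "(1/2) ^ k"] by simp
    qed
  next
    assume agree: "\<forall>k. syndetic (agree_set x y k)"
    show "\<forall>\<epsilon>>0. syndetic (?close \<epsilon>)"
    proof (intro allI impI)
      fix \<epsilon> :: real assume "\<epsilon> > 0"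
      then obtain k where k: "(1/2::real) ^ k < \<epsilon>"
        using real_arch_pow_inv[of \<epsilon> "1/2"] by auto
      have "agree_set x y k \<subseteq> ?close \<epsilon>"
        using k orbit_sdist_less_iff[of _ x y k] by force
      then show "syndetic (?close \<epsilon>)"
        using agree syndetic_mono by blast
    qed
  qed
  then show ?thesis
    unfolding SProx_def synd_agree_def syndetic_iff_bounded_gaps by auto
qed

text \<open>Syndetic agreement with a common point z implies syndetic agreement: a long window on
  which y agrees with z contains, within a bounded distance, a short window where x agrees
  with z, and there x and y agree.\<close>
lemma synd_agree_common:
  assumes "synd_agree x z" and "synd_agree y z"
  shows "synd_agree x y"
  unfolding synd_agree_def
proof
  fix k
  obtain G1 where G1: "bounded_gaps (agree_set x z k) G1"
    using assms(1) unfolding synd_agree_def by blast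
  obtain G2 where G2: "bounded_gaps (agree_set y z (G1 + k)) G2"
    using assms(2) unfolding synd_agree_def by blast
  have "bounded_gaps (agree_set x y k) (G2 + G1)"
    unfolding bounded_gaps_def
  proof
    fix j
    obtain a where a: "a \<in> agree_set y z (G1 + k)" "j \<le> a" "a < j + G2"
      using G2 unfolding bounded_gaps_def by blast
    obtain b where b: "b \<in> agree_set x z k" "a \<le> b" "b < a + G1"
      using G1 unfolding bounded_gaps_def by blast
    have "b \<in> agree_set x y k"
      unfolding agree_set_def
    proof (intro CollectI allI impI)
      fix i assume i: "i \<le> k"
      have "y (a + (b - a + i)) = z (a + (b - a + i))"
        using a(1) b(3) i unfolding agree_set_def by simp
      then have "y (b + i) = z (b + i)"
        using b(2) by (simp add: add.assoc)
      moreover have "x (b + i) = z (b + i)"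
        using b(1) i unfolding agree_set_def by auto
      ultimately show "x (b + i) = y (b + i)" by simp
    qed
    then show "\<exists>n\<in>agree_set x y k. j \<le> n \<and> n < j + (G2 + G1)"
      using a b by (intro bexI[of _ b]) auto
  qed
  then show "\<exists>G. bounded_gaps (agree_set x y k) G" by blast
qed

lemma Asy_eventually_equal:
  assumes "(x, y) \<in> Asy X"
  shows "\<exists>N. \<forall>n\<ge>N. x n = y n"
proof -
  have "(\<lambda>n. sdist ((sigma ^^ n) x) ((sigma ^^ n) y)) \<longlonglongrightarrow> 0"
    using assms unfolding Asy_def by auto
  then have "eventually (\<lambda>n. sdist ((sigma ^^ n) x) ((sigma ^^ n) y) < 1) sequentially"
    by (rule order_tendstoD) simp
  then obtain N where "\<And>n. n \<ge> N \<Longrightarrow> sdist ((sigma ^^ n) x) ((sigma ^^ n) y) < 1"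
    unfolding eventually_sequentially by blast
  then have "x n = y n" if "n \<ge> N" for n
    using sdist_less_half_pow[of "(sigma ^^ n) x" "(sigma ^^ n) y" 0] that by (simp add: sigma_pow)
  then show ?thesis by blast
qed

subsection \<open>The topology of the full shift\<close>

definition cyl :: "nat \<Rightarrow> (nat \<Rightarrow> 'a) \<Rightarrow> (nat \<Rightarrow> 'a) set" where
  "cyl N p = {r. \<forall>i<N. r i = p i}"

lemma topspace_shift_top: "topspace (shift_top A) = {x. \<forall>i. x i \<in> A}"
  by (auto simp: shift_top_def PiE_def extensional_def)

lemma openin_shift_top:
  "openin (shift_top A) S \<longleftrightarrow>
     S \<subseteq> topspace (shift_top A) \<and> (\<forall>x\<in>S. \<exists>N. topspace (shift_top A) \<inter> cyl N x \<subseteq> S)"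
proof
  assume open_S: "openin (shift_top A) S"
  have "\<exists>N. topspace (shift_top A) \<inter> cyl N x \<subseteq> S" if x: "x \<in> S" for x
  proof -
    obtain U where U_fin: "finite {i. U i \<noteq> A}" and U_x: "x \<in> Pi\<^sub>E UNIV U"
        and U_S: "Pi\<^sub>E UNIV U \<subseteq> S"
      using open_S x unfolding shift_top_def openin_product_topology_alt by auto
    obtain N where N: "\<And>i. U i \<noteq> A \<Longrightarrow> i < N"
      using finite_nat_set_iff_bounded U_fin by auto
    have "topspace (shift_top A) \<inter> cyl N x \<subseteq> Pi\<^sub>E UNIV U"
    proof
      fix y assume y: "y \<in> topspace (shift_top A) \<inter> cyl N x"
      have "y i \<in> U i" for i
        using y U_x N[of i] by (cases "i < N") (auto simp: topspace_shift_top cyl_def)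
      then show "y \<in> Pi\<^sub>E UNIV U" by (simp add: PiE_iff)
    qed
    then show ?thesis using U_S by blast
  qed
  then show "S \<subseteq> topspace (shift_top A) \<and> (\<forall>x\<in>S. \<exists>N. topspace (shift_top A) \<inter> cyl N x \<subseteq> S)"
    using openin_subset[OF open_S] by blast
next
  assume S: "S \<subseteq> topspace (shift_top A) \<and> (\<forall>x\<in>S. \<exists>N. topspace (shift_top A) \<inter> cyl N x \<subseteq> S)"
  show "openin (shift_top A) S"
    unfolding shift_top_def openin_product_topology_alt
  proof
    fix x assume x: "x \<in> S"
    then obtain N where N: "topspace (shift_top A) \<inter> cyl N x \<subseteq> S" using S by blast
    have xA: "\<And>i. x i \<in> A" using S x by (auto simp: topspace_shift_top)
    define U where "U i = (if i < N then {x i} else A)" for i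
    have "{i. U i \<noteq> A} \<subseteq> {..<N}" by (auto simp: U_def)
    then have "finite {i \<in> UNIV. U i \<noteq> topspace (discrete_topology A)}"
      by (auto intro: finite_subset)
    moreover have "\<forall>i\<in>UNIV. openin (discrete_topology A) (U i)"
      using xA by (auto simp: U_def)
    moreover have "x \<in> Pi\<^sub>E UNIV U"
      using xA by (auto simp: U_def)
    moreover have "Pi\<^sub>E UNIV U \<subseteq> S"
    proof
      fix y assume "y \<in> Pi\<^sub>E UNIV U"
      then have yU: "y i \<in> U i" for i by (simp add: PiE_iff)
      have "y i \<in> A \<and> (i < N \<longrightarrow> y i = x i)" for i
        using yU[of i] xA[of i] by (cases "i < N") (auto simp: U_def)
      then have "y \<in> topspace (shift_top A) \<inter> cyl N x"
        by (simp add: topspace_shift_top cyl_def)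
      then show "y \<in> S" using N by blast
    qed
    ultimately show "\<exists>U. finite {i \<in> UNIV. U i \<noteq> topspace (discrete_topology A)} \<and>
        (\<forall>i\<in>UNIV. openin (discrete_topology A) (U i)) \<and> x \<in> Pi\<^sub>E UNIV U \<and> Pi\<^sub>E UNIV U \<subseteq> S"
      by blast
  qed
qed

lemma closedin_shift_top_mem:
  assumes closed: "closedin (shift_top A) S" and x: "x \<in> topspace (shift_top A)"
    and approx: "\<And>N. S \<inter> cyl N x \<noteq> {}"
  shows "x \<in> S"
proof (rule ccontr)
  assume "x \<notin> S"
  moreover have "openin (shift_top A) (topspace (shift_top A) - S)"
    using closed by (simp add: closedin_def)
  ultimately obtain N where "topspace (shift_top A) \<inter> cyl N x \<subseteq> topspace (shift_top A) - S"
    using x unfolding openin_shift_top by blast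
  then show False
    using approx[of N] closedin_subset[OF closed] by blast
qed

text \<open>The full shift is totally disconnected: coordinate projections are continuous into
  discrete spaces.\<close>
lemma connectedin_shift_top_trivial:
  assumes "connectedin (shift_top A) S"
  shows "\<exists>a. S \<subseteq> {a}"
proof (rule ccontr)
  assume "\<not> ?thesis"
  then obtain x y where xy: "x \<in> S" "y \<in> S" "x \<noteq> y" by blast
  then obtain i where i: "x i \<noteq> y i" by auto
  have "connectedin (discrete_topology A) ((\<lambda>u. u i) ` S)"
    by (rule connectedin_continuous_map_image[OF continuous_map_product_projection
          assms[unfolded shift_top_def]]) simp
  then obtain a where "(\<lambda>u. u i) ` S \<subseteq> {a}"
    by (auto simp: connectedin_discrete_topology)
  then show False using xy i by auto
qed

lemma continuous_map_cyl_preserving: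
  assumes maps: "\<And>x. x \<in> topspace (shift_top B) \<Longrightarrow> h x \<in> topspace (shift_top A)"
    and preserves: "\<And>N x y. y \<in> cyl N x \<Longrightarrow> h y \<in> cyl N (h x)"
  shows "continuous_map (shift_top B) (shift_top A) h"
  unfolding continuous_map
proof (intro conjI allI impI)
  show "h ` topspace (shift_top B) \<subseteq> topspace (shift_top A)"
    using maps by blast
next
  fix U assume U: "openin (shift_top A) U"
  show "openin (shift_top B) {x \<in> topspace (shift_top B). h x \<in> U}"
    unfolding openin_shift_top
  proof (intro conjI ballI)
    fix x assume x: "x \<in> {x \<in> topspace (shift_top B). h x \<in> U}"
    then obtain N where N: "topspace (shift_top A) \<inter> cyl N (h x) \<subseteq> U"
      using U unfolding openin_shift_top by blast
    have "topspace (shift_top B) \<inter> cyl N x \<subseteq> {x \<in> topspace (shift_top B). h x \<in> U}"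
      using N maps preserves by blast
    then show "\<exists>N. topspace (shift_top B) \<inter> cyl N x \<subseteq> {x \<in> topspace (shift_top B). h x \<in> U}"
      by blast
  qed auto
qed

text \<open>An injective cylinder-preserving image of the Cantor space {0,1}^\<nat> is a Cantor set:
  compact by continuity, totally disconnected as a subset of the shift, and perfect because
  flipping one coordinate far out gives a different point in any given cylinder.\<close>
lemma cantor_set_range:
  fixes h :: "(nat \<Rightarrow> bool) \<Rightarrow> nat \<Rightarrow> 'a"
  assumes in_A: "\<And>\<alpha> i. h \<alpha> i \<in> A"
    and preserves: "\<And>N \<alpha> \<beta>. \<beta> \<in> cyl N \<alpha> \<Longrightarrow> h \<beta> \<in> cyl N (h \<alpha>)"
    and "inj h"
  shows "cantor_set_in (shift_top A) (range h)"
  unfolding cantor_set_in_def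
proof (intro conjI allI impI)
  have h_top: "h \<alpha> \<in> topspace (shift_top A)" for \<alpha>
    using in_A by (simp add: topspace_shift_top)
  have cont: "continuous_map (shift_top UNIV) (shift_top A) h"
    using continuous_map_cyl_preserving h_top preserves by blast
  have "compact_space (shift_top (UNIV :: bool set))"
    unfolding shift_top_def
    by (simp add: compact_space_product_topology compact_space_discrete_topology)
  then have "compactin (shift_top A) (h ` topspace (shift_top UNIV))"
    using image_compactin[OF _ cont] by (simp add: compact_space_def)
  then show "compactin (shift_top A) (range h)"
    by (simp add: topspace_shift_top)
  show "range h \<subseteq> shift_top A derived_set_of range h"
  proof
    fix x assume "x \<in> range h"
    then obtain \<alpha> where x: "x = h \<alpha>" by blast
    show "x \<in> shift_top A derived_set_of range h"
      unfolding in_derived_set_of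
    proof (intro conjI allI impI)
      show "x \<in> topspace (shift_top A)" using h_top x by simp
    next
      fix T assume T: "x \<in> T \<and> openin (shift_top A) T"
      then obtain N where N: "topspace (shift_top A) \<inter> cyl N x \<subseteq> T"
        unfolding openin_shift_top by blast
      define \<beta> where "\<beta> = \<alpha>(N := \<not> \<alpha> N)"
      have "\<beta> \<noteq> \<alpha>" unfolding \<beta>_def by (metis fun_upd_same)
      then have "h \<beta> \<noteq> x" using \<open>inj h\<close> x by (auto dest: injD)
      moreover have "h \<beta> \<in> T"
        using N preserves[of \<beta> N \<alpha>] h_top x by (auto simp: \<beta>_def cyl_def)
      ultimately show "\<exists>y. y \<noteq> x \<and> y \<in> range h \<and> y \<in> T" by blast
    qed
  qed
qed (auto simp: connectedin_shift_top_trivial)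

subsection \<open>Condensation points\<close>

definition condensation :: "(nat \<Rightarrow> 'a) set \<Rightarrow> (nat \<Rightarrow> 'a) set" where
  "condensation B = {p. \<forall>N. uncountable (B \<inter> cyl N p)}"

text \<open>Over a finite alphabet there are only countably many cylinders, so all but countably
  many points of B are condensation points of B.\<close>
lemma countable_non_condensation:
  assumes A: "finite A" and B: "B \<subseteq> {r. \<forall>i. r i \<in> A}"
  shows "countable (B - condensation B)"
proof -
  define piece where "piece N w = B \<inter> {r. \<forall>i<N. r i = w ! i}" for N and w :: "'a list"
  define words where "words N = {w. set w \<subseteq> A \<and> length w = N \<and> countable (piece N w)}" for N
  have "B - condensation B \<subseteq> (\<Union>N. \<Union>w\<in>words N. piece N w)"
  proof
    fix p assume p: "p \<in> B - condensation B"
    then obtain N where N: "countable (B \<inter> cyl N p)"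
      unfolding condensation_def by auto
    have "piece N (map p [0..<N]) = B \<inter> cyl N p"
      by (auto simp: piece_def cyl_def)
    moreover have "set (map p [0..<N]) \<subseteq> A"
      using p B by auto
    ultimately have "map p [0..<N] \<in> words N" and "p \<in> piece N (map p [0..<N])"
      using N p by (auto simp: words_def cyl_def)
    then show "p \<in> (\<Union>N. \<Union>w\<in>words N. piece N w)" by blast
  qed
  moreover have "countable (\<Union>N. \<Union>w\<in>words N. piece N w)"
  proof (rule countable_UN[of UNIV], simp)
    fix N
    have "finite {w. set w \<subseteq> A \<and> length w = N}"
      by (rule finite_lists_length_eq[OF A])
    then have "finite (words N)"
      unfolding words_def by (rule rev_finite_subset) auto
    then show "countable (\<Union>w\<in>words N. piece N w)"
      by (rule countable_UN[OF countable_finite]) (simp add: words_def)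
  qed
  ultimately show ?thesis
    using countable_subset by blast
qed

lemma uncountable_condensation:
  assumes "finite A" "B \<subseteq> {r. \<forall>i. r i \<in> A}" "uncountable B"
  shows "uncountable (B \<inter> condensation B)"
proof -
  have "B \<inter> condensation B = B - (B - condensation B)" by blast
  then show ?thesis
    using uncountable_minus_countable[OF assms(3) countable_non_condensation[OF assms(1,2)]]
    by simp
qed

lemma finite_eventually_equal:
  fixes L :: nat
  assumes A: "finite A"
  shows "finite {r. (\<forall>i. r i \<in> A) \<and> (\<forall>n\<ge>L. r n = c n)}"
proof -
  let ?S = "{r. (\<forall>i. r i \<in> A) \<and> (\<forall>n\<ge>L. r n = c n)}"
  have "inj_on (\<lambda>r. map r [0..<L]) ?S"
  proof (rule inj_onI)
    fix r s assume r: "r \<in> ?S" and s: "s \<in> ?S" and eq: "map r [0..<L] = map s [0..<L]"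
    have "r i = s i" for i
    proof (cases "i < L")
      case True
      then show ?thesis using arg_cong[OF eq, of "\<lambda>w. w ! i"] by simp
    next
      case False
      then show ?thesis using r s by simp
    qed
    then show "r = s" by blast
  qed
  moreover have "(\<lambda>r. map r [0..<L]) ` ?S \<subseteq> {w. set w \<subseteq> A \<and> length w = L}" by auto
  then have "finite ((\<lambda>r. map r [0..<L]) ` ?S)"
    by (rule finite_subset) (rule finite_lists_length_eq[OF A])
  ultimately show ?thesis
    using finite_imageD by blast
qed

text \<open>From finitely many uncountable sets one can choose condensation points that pairwise
  differ somewhere beyond any prescribed position L: each new choice only has to avoid the
  finitely many sequences that agree from L on with the earlier choices.\<close>
lemma choose_separated_condensation_points:
  assumes A: "finite A" and I: "finite I"
    and D: "\<And>i. i \<in> I \<Longrightarrow> D i \<subseteq> {r. \<forall>n. r n \<in> A} \<and> uncountable (D i)"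
  shows "\<exists>q. \<forall>i\<in>I. q i \<in> D i \<inter> condensation (D i) \<and>
           (\<forall>j\<in>I. j \<noteq> i \<longrightarrow> (\<exists>n\<ge>L. q i n \<noteq> q j n))"
  using I D
proof (induction I rule: finite_induct)
  case empty
  then show ?case by simp
next
  case (insert a F)
  have D_F: "\<And>i. i \<in> F \<Longrightarrow> D i \<subseteq> {r. \<forall>n. r n \<in> A} \<and> uncountable (D i)"
    by (simp add: insert.prems)
  obtain q where q: "\<forall>i\<in>F. q i \<in> D i \<inter> condensation (D i) \<and>
      (\<forall>j\<in>F. j \<noteq> i \<longrightarrow> (\<exists>n\<ge>L. q i n \<noteq> q j n))"
    using insert.IH[OF D_F] by blast
  have Da: "D a \<subseteq> {r. \<forall>n. r n \<in> A}" "uncountable (D a)"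
    by (simp_all add: insert.prems)
  define bad where "bad = (\<Union>j\<in>F. {r. (\<forall>i. r i \<in> A) \<and> (\<forall>n\<ge>L. r n = q j n)})"
  have "finite bad"
    unfolding bad_def by (intro finite_UN_I insert.hyps(1) finite_eventually_equal[OF A])
  then have "uncountable (D a \<inter> condensation (D a) - bad)"
    using uncountable_minus_countable[OF uncountable_condensation[OF A Da]] countable_finite
    by blast
  then have "D a \<inter> condensation (D a) - bad \<noteq> {}" by (metis countable_empty)
  then obtain r where r: "r \<in> D a \<inter> condensation (D a)" "r \<notin> bad" by blast
  have r_sep: "\<exists>n\<ge>L. r n \<noteq> q j n" if "j \<in> F" for j
    using r Da(1) that unfolding bad_def by auto
  have r_sep': "\<exists>n\<ge>L. q j n \<noteq> r n" if "j \<in> F" for j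
    using r_sep[OF that] by metis
  have q_upd: "(q(a := r)) i = q i" if "i \<in> F" for i
    using that insert.hyps(2) by auto
  show ?case
  proof (intro exI[of _ "q(a := r)"] ballI conjI allI impI)
    fix i assume i: "i \<in> insert a F"
    show "(q(a := r)) i \<in> D i \<inter> condensation (D i)"
      using i q q_upd r(1) by (cases "i = a") auto
    fix j assume j: "j \<in> insert a F" "j \<noteq> i"
    show "\<exists>n\<ge>L. (q(a := r)) i n \<noteq> (q(a := r)) j n"
    proof (cases "i = a")
      case True
      then show ?thesis using j r_sep q_upd by auto
    next
      case False
      then have "i \<in> F" using i by blast
      show ?thesis
      proof (cases "j = a")
        case True
        then show ?thesis using \<open>i \<in> F\<close> \<open>i \<noteq> a\<close> r_sep' q_upd by auto
      next
        case False
        then have "j \<in> F" using j by blast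
        then show ?thesis using \<open>i \<in> F\<close> j(2) q q_upd by auto
      qed
    qed
  qed
qed

lemma finite_common_witness_bound:
  assumes "finite S" and "\<And>x. x \<in> S \<Longrightarrow> \<exists>n::nat. P x n"
  shows "\<exists>M. \<forall>x\<in>S. \<exists>n<M. P x n"
  using assms
proof (induction S rule: finite_induct)
  case empty
  then show ?case by simp
next
  case (insert a F)
  then obtain M where M: "\<forall>x\<in>F. \<exists>n<M. P x n" by blast
  obtain n where "P a n" using insert.prems by blast
  show ?case
  proof (rule exI[of _ "max M (Suc n)"], intro ballI)
    fix x assume "x \<in> insert a F"
    then consider "x = a" | "x \<in> F" by blast
    then show "\<exists>m<max M (Suc n). P x m"
    proof cases
      case 1
      then show ?thesis using \<open>P a n\<close> by (intro exI[of _ n]) auto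
    next
      case 2
      then obtain m where "m < M" "P x m" using M by blast
      then show ?thesis by (intro exI[of _ m]) auto
    qed
  qed
qed

lemma choose_boundedly_separated_condensation_points:
  assumes A: "finite A" and I: "finite I"
    and D: "\<And>i. i \<in> I \<Longrightarrow> D i \<subseteq> {r. \<forall>n. r n \<in> A} \<and> uncountable (D i)"
  shows "\<exists>q L'. L < L' \<and> (\<forall>i\<in>I. q i \<in> D i \<inter> condensation (D i) \<and>
           (\<forall>j\<in>I. j \<noteq> i \<longrightarrow> (\<exists>n. L \<le> n \<and> n < L' \<and> q i n \<noteq> q j n)))"
proof -
  obtain q where q: "\<forall>i\<in>I. q i \<in> D i \<inter> condensation (D i) \<and>
      (\<forall>j\<in>I. j \<noteq> i \<longrightarrow> (\<exists>n\<ge>L. q i n \<noteq> q j n))"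
    using choose_separated_condensation_points[of A I D L, OF A I D] by blast
  define S where "S = {(i, j). i \<in> I \<and> j \<in> I \<and> j \<noteq> i}"
  have "S \<subseteq> I \<times> I" by (auto simp: S_def)
  then have "finite S" by (rule finite_subset) (simp add: I)
  have witness: "\<exists>n. L \<le> n \<and> q (fst x) n \<noteq> q (snd x) n" if xS: "x \<in> S" for x
  proof -
    obtain i j where x: "x = (i, j)" and "i \<in> I" "j \<in> I" "j \<noteq> i"
      using xS by (auto simp: S_def)
    then have "\<exists>n\<ge>L. q i n \<noteq> q j n" using q by simp
    then show ?thesis using x by auto
  qed
  have "\<exists>M. \<forall>x\<in>S. \<exists>n<M. L \<le> n \<and> q (fst x) n \<noteq> q (snd x) n"
    by (rule finite_common_witness_bound[OF \<open>finite S\<close>]) (rule witness)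
  then obtain M where M: "\<forall>x\<in>S. \<exists>n<M. L \<le> n \<and> q (fst x) n \<noteq> q (snd x) n" ..
  show ?thesis
  proof (rule exI[of _ q], rule exI[of _ "max (Suc L) M"], intro conjI ballI allI impI)
    show "L < max (Suc L) M" by simp
    fix i assume i: "i \<in> I"
    show "q i \<in> D i \<inter> condensation (D i)"
      by (rule conjunct1[OF bspec[OF q i]])
    fix j assume "j \<in> I" "j \<noteq> i"
    then have "(i, j) \<in> S" using i by (simp add: S_def)
    then obtain n where "n < M" "L \<le> n" "q i n \<noteq> q j n" using M by auto
    then show "\<exists>n. L \<le> n \<and> n < max (Suc L) M \<and> q i n \<noteq> q j n" by auto
  qed
qed

lemma uncountable_pigeonhole:
  fixes P :: "'b \<Rightarrow> nat \<Rightarrow> bool"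
  assumes "uncountable B" and "\<And>q. q \<in> B \<Longrightarrow> \<exists>G. P q G"
  shows "\<exists>G. uncountable {q \<in> B. P q G}"
proof (rule ccontr)
  assume "\<not> ?thesis"
  then have "countable (\<Union>G. {q \<in> B. P q G})" by auto
  moreover have "B \<subseteq> (\<Union>G. {q \<in> B. P q G})" using assms(2) by blast
  ultimately show False
    using assms(1) countable_subset by blast
qed

subsection \<open>One level of the Cantor scheme and its refinement\<close>

definition scheme_level ::
    "(nat \<Rightarrow> 'a) set \<Rightarrow> (nat \<Rightarrow> 'a) \<Rightarrow> nat \<Rightarrow> nat \<Rightarrow> (bool list \<Rightarrow> nat \<Rightarrow> 'a)
       \<Rightarrow> (bool list \<Rightarrow> (nat \<Rightarrow> 'a) set) \<Rightarrow> bool" where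
  "scheme_level Y z m L p B \<longleftrightarrow> m \<le> L \<and>
     (\<forall>s. length s = m \<longrightarrow> p s \<in> B s \<and> B s \<subseteq> Y \<and> uncountable (B s) \<and> B s \<subseteq> cyl L (p s) \<and>
        (\<forall>k<m. \<exists>G. \<forall>q\<in>B s. bounded_gaps (agree_set q z k) G))"

definition scheme_step ::
    "nat \<Rightarrow> nat \<Rightarrow> (bool list \<Rightarrow> (nat \<Rightarrow> 'a) set) \<Rightarrow> nat \<Rightarrow> (bool list \<Rightarrow> nat \<Rightarrow> 'a)
       \<Rightarrow> (bool list \<Rightarrow> (nat \<Rightarrow> 'a) set) \<Rightarrow> bool" where
  "scheme_step m L B L' p' B' \<longleftrightarrow> L < L' \<and>
     (\<forall>s b. length s = m \<longrightarrow> B' (s @ [b]) \<subseteq> B s) \<and>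
     (\<forall>s t. length s = Suc m \<longrightarrow> length t = Suc m \<longrightarrow> s \<noteq> t \<longrightarrow>
        (\<exists>i. L \<le> i \<and> i < L' \<and> p' s i \<noteq> p' t i))"

lemma uniform_gap_refinement:
  assumes Yz: "\<And>y. y \<in> Y \<Longrightarrow> synd_agree y z"
    and level: "scheme_level Y z m L p B"
  shows "\<exists>B1. \<forall>s. length s = m \<longrightarrow> B1 s \<subseteq> B s \<and> uncountable (B1 s) \<and>
           (\<exists>G. \<forall>q\<in>B1 s. bounded_gaps (agree_set q z m) G)"
proof -
  have "\<exists>G. uncountable {q \<in> B s. bounded_gaps (agree_set q z m) G}" if s: "length s = m" for s
  proof (rule uncountable_pigeonhole)
    show "uncountable (B s)"
      using level s by (simp add: scheme_level_def)
    fix q assume "q \<in> B s"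
    then have "q \<in> Y"
      using level s by (auto simp: scheme_level_def)
    then show "\<exists>G. bounded_gaps (agree_set q z m) G"
      using Yz unfolding synd_agree_def by blast
  qed
  then obtain G where "\<And>s. length s = m \<Longrightarrow>
      uncountable {q \<in> B s. bounded_gaps (agree_set q z m) (G s)}"
    by metis
  then show ?thesis
    by (intro exI[of _ "\<lambda>s. {q \<in> B s. bounded_gaps (agree_set q z m) (G s)}"]) auto
qed

text \<open>Every level can be refined: shrink each B s to points sharing a gap bound for windows
  of length m, pick separated condensation points for the two children of s, and cut down to
  cylinders long enough to see the separation.\<close>
lemma scheme_refine:
  assumes A: "finite A" and YA: "Y \<subseteq> {r. \<forall>i. r i \<in> A}"
    and Yz: "\<And>y. y \<in> Y \<Longrightarrow> synd_agree y z"
    and level: "scheme_level Y z m L p B"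
  shows "\<exists>L' p' B'. scheme_level Y z (Suc m) L' p' B' \<and> scheme_step m L B L' p' B'"
proof -
  have mL: "m \<le> L"
    using level by (simp add: scheme_level_def)
  have BY: "B s \<subseteq> Y"
    and B_gaps: "\<And>k. k < m \<Longrightarrow> \<exists>G. \<forall>q\<in>B s. bounded_gaps (agree_set q z k) G"
    if "length s = m" for s
    using level that by (simp_all add: scheme_level_def)
  obtain B1 where B1: "\<And>s. length s = m \<Longrightarrow> B1 s \<subseteq> B s \<and> uncountable (B1 s) \<and>
      (\<exists>G. \<forall>q\<in>B1 s. bounded_gaps (agree_set q z m) G)"
    using uniform_gap_refinement[OF Yz level] by blast
  define I where "I = {t :: bool list. length t = Suc m}"
  have I_fin: "finite I"
    using finite_lists_length_eq[of "UNIV :: bool set" "Suc m"] by (simp add: I_def)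
  have B1_parent: "B1 (butlast t) \<subseteq> {r. \<forall>n. r n \<in> A} \<and> uncountable (B1 (butlast t))"
    if "t \<in> I" for t
    using B1[of "butlast t"] BY[of "butlast t"] YA that by (auto simp: I_def)
  obtain q L' where L': "L < L'" and q: "\<forall>t\<in>I. q t \<in> B1 (butlast t) \<inter> condensation (B1 (butlast t)) \<and>
      (\<forall>u\<in>I. u \<noteq> t \<longrightarrow> (\<exists>n. L \<le> n \<and> n < L' \<and> q t n \<noteq> q u n))"
    using choose_boundedly_separated_condensation_points[of A I "\<lambda>t. B1 (butlast t)" L,
        OF A I_fin B1_parent] by blast
  define B' where "B' t = B1 (butlast t) \<inter> cyl L' (q t)" for t
  have "scheme_level Y z (Suc m) L' q B'"
    unfolding scheme_level_def
  proof (intro conjI allI impI)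
    show "Suc m \<le> L'" using mL L' by simp
    fix t :: "bool list" assume "length t = Suc m"
    then have tI: "t \<in> I" and len: "length (butlast t) = m" by (simp_all add: I_def)
    show "q t \<in> B' t" using q tI by (simp add: B'_def cyl_def)
    show "B' t \<subseteq> Y" using B1[OF len] BY[OF len] by (auto simp: B'_def)
    show "uncountable (B' t)" using q tI by (simp add: B'_def condensation_def)
    show "B' t \<subseteq> cyl L' (q t)" by (simp add: B'_def)
    fix k assume "k < Suc m"
    then consider "k < m" | "k = m" by linarith
    then show "\<exists>G. \<forall>q'\<in>B' t. bounded_gaps (agree_set q' z k) G"
    proof cases
      case 1
      then obtain G where "\<forall>q'\<in>B (butlast t). bounded_gaps (agree_set q' z k) G"
        using B_gaps[OF len] by blast
      then show ?thesis using B1[OF len] by (auto simp: B'_def)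
    next
      case 2
      then obtain G where "\<forall>q'\<in>B1 (butlast t). bounded_gaps (agree_set q' z k) G"
        using B1[OF len] by blast
      then show ?thesis by (auto simp: B'_def)
    qed
  qed
  moreover have "scheme_step m L B L' q B'"
    unfolding scheme_step_def
  proof (intro conjI allI impI)
    show "L < L'" by (rule L')
    fix s :: "bool list" and b :: bool assume "length s = m"
    then show "B' (s @ [b]) \<subseteq> B s" using B1[of s] by (auto simp: B'_def)
  next
    fix s t :: "bool list" assume "length s = Suc m" "length t = Suc m" "s \<noteq> t"
    then show "\<exists>i. L \<le> i \<and> i < L' \<and> q s i \<noteq> q t i" using q by (simp add: I_def)
  qed
  ultimately show ?thesis by blast
qed

subsection \<open>The infinite scheme and its branches\<close>

definition init_word :: "(nat \<Rightarrow> bool) \<Rightarrow> nat \<Rightarrow> bool list" where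
  "init_word \<alpha> n = map \<alpha> [0..<n]"

lemma length_init_word [simp]: "length (init_word \<alpha> n) = n"
  by (simp add: init_word_def)

lemma init_word_Suc: "init_word \<alpha> (Suc n) = init_word \<alpha> n @ [\<alpha> n]"
  by (simp add: init_word_def)

lemma init_word_eq: "\<alpha> \<in> cyl n \<beta> \<Longrightarrow> init_word \<alpha> n = init_word \<beta> n"
  by (simp add: init_word_def cyl_def)

lemma init_word_neq: "d < n \<Longrightarrow> \<alpha> d \<noteq> \<beta> d \<Longrightarrow> init_word \<alpha> n \<noteq> init_word \<beta> n"
  by (metis init_word_def diff_zero length_upt nth_map nth_upt plus_nat.add_0)

locale scheme_sequence =
  fixes Y :: "(nat \<Rightarrow> 'a) set" and z :: "nat \<Rightarrow> 'a"
    and L :: "nat \<Rightarrow> nat" and p :: "nat \<Rightarrow> bool list \<Rightarrow> nat \<Rightarrow> 'a"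
    and B :: "nat \<Rightarrow> bool list \<Rightarrow> (nat \<Rightarrow> 'a) set"
  assumes level: "scheme_level Y z n (L n) (p n) (B n)"
    and linked: "scheme_step n (L n) (B n) (L (Suc n)) (p (Suc n)) (B (Suc n))"

lemma scheme_sequence_exists:
  assumes A: "finite A" and YA: "Y \<subseteq> {r. \<forall>i. r i \<in> A}" and Y_unc: "uncountable Y"
    and Yz: "\<And>y. y \<in> Y \<Longrightarrow> synd_agree y z"
  shows "\<exists>L p B. scheme_sequence Y z L p B"
proof -
  define P where "P n x = scheme_level Y z n (fst x) (fst (snd x)) (snd (snd x))" for n x
  define Q where "Q n x y = scheme_step n (fst x) (snd (snd x)) (fst y) (fst (snd y)) (snd (snd y))"
    for n and x y :: "nat \<times> (bool list \<Rightarrow> nat \<Rightarrow> 'a) \<times> (bool list \<Rightarrow> (nat \<Rightarrow> 'a) set)"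
  obtain y0 where "y0 \<in> Y"
    using Y_unc by (metis countable_empty equals0I)
  then have "P 0 (0, \<lambda>_. y0, \<lambda>_. Y)"
    using Y_unc by (simp add: P_def scheme_level_def cyl_def)
  then have start: "\<exists>x. P 0 x" ..
  have refine: "\<exists>y. P (Suc n) y \<and> Q n x y" if Pnx: "P n x" for x n
  proof -
    have "scheme_level Y z n (fst x) (fst (snd x)) (snd (snd x))"
      using Pnx by (simp add: P_def)
    then obtain L' p' B' where "scheme_level Y z (Suc n) L' p' B'"
        "scheme_step n (fst x) (snd (snd x)) L' p' B'"
      using scheme_refine[OF A YA Yz] by blast
    then show ?thesis
      by (intro exI[of _ "(L', p', B')"]) (simp add: P_def Q_def)
  qed
  obtain f where f: "\<forall>n. P n (f n) \<and> Q n (f n) (f (Suc n))"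
    using dependent_nat_choice[of P Q, OF start refine] by blast
  then have "scheme_sequence Y z (\<lambda>n. fst (f n)) (\<lambda>n. fst (snd (f n))) (\<lambda>n. snd (snd (f n)))"
    unfolding scheme_sequence_def by (simp add: P_def Q_def)
  then show ?thesis by blast
qed

context scheme_sequence
begin

lemma L_ge: "n \<le> L n"
  using level[of n] by (simp add: scheme_level_def)

lemma point_in_level: "p n (init_word \<alpha> n) \<in> B n (init_word \<alpha> n)"
  using level[of n] by (simp add: scheme_level_def)

lemma level_subset_Y: "B n (init_word \<alpha> n) \<subseteq> Y"
  using level[of n] by (simp add: scheme_level_def)

lemma level_subset_cyl: "B n (init_word \<alpha> n) \<subseteq> cyl (L n) (p n (init_word \<alpha> n))"
  using level[of n] by (simp add: scheme_level_def)

lemma level_gaps: "k < n \<Longrightarrow> \<exists>G. \<forall>q\<in>B n (init_word \<alpha> n). bounded_gaps (agree_set q z k) G"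
  using level[of n] by (simp add: scheme_level_def)

lemma level_nested:
  assumes "m \<le> n"
  shows "B n (init_word \<alpha> n) \<subseteq> B m (init_word \<alpha> m)"
  using assms
proof (induction n rule: dec_induct)
  case (step n)
  have "B (Suc n) (init_word \<alpha> n @ [\<alpha> n]) \<subseteq> B n (init_word \<alpha> n)"
    using linked[of n] by (simp add: scheme_step_def)
  then show ?case
    using step.IH by (simp add: init_word_Suc)
qed simp

lemma points_coherent:
  assumes "m \<le> n" and "i < L m"
  shows "p n (init_word \<alpha> n) i = p m (init_word \<alpha> m) i"
proof -
  have "p n (init_word \<alpha> n) \<in> B m (init_word \<alpha> m)"
    using point_in_level level_nested[OF assms(1)] by blast
  then have "p n (init_word \<alpha> n) \<in> cyl (L m) (p m (init_word \<alpha> m))"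
    using level_subset_cyl by blast
  then show ?thesis
    using assms(2) by (simp add: cyl_def)
qed

text \<open>The branch point of \<alpha>: the limit of the chosen points along \<alpha>.\<close>
definition branch :: "(nat \<Rightarrow> bool) \<Rightarrow> nat \<Rightarrow> 'a" where
  "branch \<alpha> i = p (Suc i) (init_word \<alpha> (Suc i)) i"

lemma branch_eq:
  assumes "i < L n"
  shows "branch \<alpha> i = p n (init_word \<alpha> n) i"
proof -
  let ?M = "max n (Suc i)"
  have "i < L (Suc i)"
    using L_ge[of "Suc i"] by simp
  then have "p ?M (init_word \<alpha> ?M) i = p (Suc i) (init_word \<alpha> (Suc i)) i"
    by (intro points_coherent) simp_all
  moreover have "p ?M (init_word \<alpha> ?M) i = p n (init_word \<alpha> n) i"
    using assms by (intro points_coherent) simp_all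
  ultimately show ?thesis
    by (simp add: branch_def)
qed

lemma branch_cyl:
  assumes "\<beta> \<in> cyl N \<alpha>"
  shows "branch \<beta> \<in> cyl N (branch \<alpha>)"
proof -
  have "branch \<beta> i = branch \<alpha> i" if "i < N" for i
  proof -
    have "i < L N" using that L_ge[of N] by simp
    then show ?thesis
      using branch_eq init_word_eq[OF assms] by simp
  qed
  then show ?thesis by (simp add: cyl_def)
qed

lemma branch_approx: "p N (init_word \<alpha> N) \<in> Y \<inter> cyl N (branch \<alpha>)"
proof -
  have "p N (init_word \<alpha> N) \<in> Y"
    using point_in_level level_subset_Y by blast
  moreover have "p N (init_word \<alpha> N) i = branch \<alpha> i" if "i < N" for i
    using branch_eq[of i N \<alpha>] that L_ge[of N] by simp
  ultimately show ?thesis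
    by (simp add: cyl_def)
qed

lemma branch_mem_closed:
  assumes closed: "closedin (shift_top A) X" and "Y \<subseteq> X"
  shows "branch \<alpha> \<in> X"
proof (rule closedin_shift_top_mem[OF closed])
  show "X \<inter> cyl N (branch \<alpha>) \<noteq> {}" for N
    using branch_approx \<open>Y \<subseteq> X\<close> by blast
  have "branch \<alpha> i \<in> A" for i
  proof -
    let ?y = "p (Suc i) (init_word \<alpha> (Suc i))"
    have y_top: "?y \<in> topspace (shift_top A)" and y_i: "?y i = branch \<alpha> i"
      using branch_approx[of "Suc i" \<alpha>] \<open>Y \<subseteq> X\<close> closedin_subset[OF closed]
      by (auto simp: cyl_def)
    have "?y i \<in> A" using y_top by (simp add: topspace_shift_top)
    then show ?thesis using y_i by simp
  qed
  then show "branch \<alpha> \<in> topspace (shift_top A)"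
    by (simp add: topspace_shift_top)
qed

text \<open>Distinct branches split at some level beyond N, after which their points differ in
  the block of coordinates fixed at that level.\<close>
lemma branch_separates:
  assumes "\<alpha> \<noteq> \<beta>"
  shows "\<exists>i\<ge>N. branch \<alpha> i \<noteq> branch \<beta> i"
proof -
  obtain d where d: "\<alpha> d \<noteq> \<beta> d" using assms by auto
  define n where "n = max d N"
  have "init_word \<alpha> (Suc n) \<noteq> init_word \<beta> (Suc n)"
    using d by (intro init_word_neq[of d]) (simp_all add: n_def)
  then obtain i where i: "L n \<le> i" "i < L (Suc n)"
      "p (Suc n) (init_word \<alpha> (Suc n)) i \<noteq> p (Suc n) (init_word \<beta> (Suc n)) i"
    using linked[of n] unfolding scheme_step_def by (metis length_init_word)
  then have "branch \<alpha> i \<noteq> branch \<beta> i"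
    by (simp add: branch_eq)
  moreover have "N \<le> i"
    using i(1) L_ge[of n] by (simp add: n_def)
  ultimately show ?thesis by blast
qed

lemma inj_branch: "inj branch"
  by (rule injI) (metis branch_separates)

text \<open>Every branch agrees syndetically with z: for the window length k, the points of level
  k+1 along the branch share a gap bound G, and the branch coincides with a point of a deeper
  level on any prescribed finite stretch.\<close>
lemma branch_synd_agree: "synd_agree (branch \<alpha>) z"
  unfolding synd_agree_def
proof
  fix k
  obtain G where G: "\<forall>q\<in>B (Suc k) (init_word \<alpha> (Suc k)). bounded_gaps (agree_set q z k) G"
    using level_gaps[of k "Suc k" \<alpha>] by blast
  have "bounded_gaps (agree_set (branch \<alpha>) z k) G"
    unfolding bounded_gaps_def
  proof
    fix j
    define n where "n = Suc k + j + G + k"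
    have "p n (init_word \<alpha> n) \<in> B (Suc k) (init_word \<alpha> (Suc k))"
      using point_in_level[of n \<alpha>] level_nested[of "Suc k" n \<alpha>] by (auto simp: n_def)
    then obtain m where m: "m \<in> agree_set (p n (init_word \<alpha> n)) z k" "j \<le> m" "m < j + G"
      using G unfolding bounded_gaps_def by blast
    have "m + i < L n" if "i \<le> k" for i
      using m(3) that L_ge[of n] by (simp add: n_def)
    then have "m \<in> agree_set (branch \<alpha>) z k"
      using m(1) branch_eq[of "m + _" n \<alpha>] by (simp add: agree_set_def)
    then show "\<exists>m\<in>agree_set (branch \<alpha>) z k. j \<le> m \<and> m < j + G"
      using m(2,3) by blast
  qed
  then show "\<exists>G. bounded_gaps (agree_set (branch \<alpha>) z k) G" by blast
qed

end

lemma synd_scrambled_range: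
  fixes h :: "(nat \<Rightarrow> bool) \<Rightarrow> nat \<Rightarrow> 'a"
  assumes in_X: "\<And>\<alpha>. h \<alpha> \<in> X" and agree_z: "\<And>\<alpha>. synd_agree (h \<alpha>) z"
    and separates: "\<And>\<alpha> \<beta> N. \<alpha> \<noteq> \<beta> \<Longrightarrow> \<exists>i\<ge>N. h \<alpha> i \<noteq> h \<beta> i"
  shows "synd_scrambled X (range h)"
  unfolding synd_scrambled_def
proof (intro conjI ballI impI)
  show "range h \<subseteq> X" using in_X by blast
  have "h (\<lambda>_. True) \<noteq> h (\<lambda>_. False)"
    using separates[of "\<lambda>_. True" "\<lambda>_. False" 0] by (metis (full_types))
  then show "\<exists>x\<in>range h. \<exists>y\<in>range h. x \<noteq> y" by blast
next
  fix x y assume "x \<in> range h" "y \<in> range h" "x \<noteq> y"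
  then obtain \<alpha> \<beta> where x: "x = h \<alpha>" and y: "y = h \<beta>" and "\<alpha> \<noteq> \<beta>" by auto
  have "synd_agree x y"
    using synd_agree_common[OF agree_z[of \<alpha>] agree_z[of \<beta>]] x y by simp
  then have "(x, y) \<in> SProx X"
    using in_X x y by (simp add: SProx_iff)
  moreover have "(x, y) \<notin> Asy X"
  proof
    assume "(x, y) \<in> Asy X"
    then obtain N where "\<forall>n\<ge>N. x n = y n" using Asy_eventually_equal by blast
    then show False using separates[OF \<open>\<alpha> \<noteq> \<beta>\<close>, of N] x y by auto
  qed
  ultimately show "(x, y) \<in> SProx X - Asy X" by blast
qed

theorem proposition3p5:
  fixes A :: "'a set" and X :: "(nat \<Rightarrow> 'a) set"
  assumes "one_sided_subshift A X"
    and "\<exists>z\<in>X. uncountable {y \<in> X. (y, z) \<in> SProx X}"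
  shows "\<exists>C. cantor_set_in (shift_top A) C \<and> synd_scrambled X C"
proof -
  have A: "finite A" and X_closed: "closedin (shift_top A) X"
    and X_top: "X \<subseteq> topspace (shift_top A)"
    using assms(1) by (simp_all add: one_sided_subshift_def)
  obtain z where "uncountable {y \<in> X. (y, z) \<in> SProx X}" using assms(2) by blast
  moreover define Y where "Y = {y \<in> X. (y, z) \<in> SProx X}"
  ultimately have Y_unc: "uncountable Y" by simp
  have YX: "Y \<subseteq> X" and Yz: "\<And>y. y \<in> Y \<Longrightarrow> synd_agree y z"
    by (auto simp: Y_def SProx_iff)
  have YA: "Y \<subseteq> {r. \<forall>i. r i \<in> A}"
    using YX X_top by (auto simp: topspace_shift_top)
  obtain L p B where "scheme_sequence Y z L p B"
    using scheme_sequence_exists[OF A YA Y_unc Yz] by blast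
  then interpret S: scheme_sequence Y z L p B .
  have in_X: "S.branch \<alpha> \<in> X" for \<alpha>
    using S.branch_mem_closed[OF X_closed YX] .
  then have "S.branch \<alpha> i \<in> A" for \<alpha> i
    using X_top by (auto simp: topspace_shift_top)
  then have "cantor_set_in (shift_top A) (range S.branch)"
    using cantor_set_range S.branch_cyl S.inj_branch by blast
  moreover have "synd_scrambled X (range S.branch)"
    using synd_scrambled_range in_X S.branch_synd_agree S.branch_separates by blast
  ultimately show ?thesis by blast
qed

end
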